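(* Let $\theta>0$, $u\in[0,1)$, $\alpha>0$, and let $\rho(\theta,u)=\sigma(\theta,u)^{1/\alpha}$. Then for every transmitter $\mathsf x\in\mathcal X$, $C_{\mathsf x}\subseteq Q_{\mathsf x}(\rho(\theta,u))$, and consequently $\mathcal C\subseteq\mathcal Q:=\bigcup_{\mathsf x\in\mathcal X}Q_{\mathsf x}(\rho(\theta,u))$.
   Context: Network model: $\mathcal X\subset\mathbb{R}^2$ is a locally finite set of transmitter locations with at least two points; all transmitters use unit power, $\alpha>0$ is the path loss exponent. To each transmitter is attached an independent fading variable; the serving link's fading $h_1\sim\mathrm{Gamma}(\text{shape }p,\text{rate }p)$ and each interferer's fading $\sim\mathrm{Gamma}(\text{shape }q,\text{rate }q)$ (Nakagami-$(p,q)$ fading, $p,q>0$). For a location $\mathsf y$ served by $\mathsf x\in\mathcal X$ (a nearest point of $\mathcal X$ to $\mathsf y$), $\mathsf{SIR}_{\mathsf y}=\frac{h_{\mathsf x}\|\mathsf x-\mathsf y\|^{-\alpha}}{\sum_{\mathsf x'\in\mathcal X\setminus\{\mathsf x\}}h_{\mathsf x'}\|\mathsf x'-\mathsf y\|^{-\alpha}}$. $H=h_1/h_2$ (serving over interfering fading) has cdf $F_H(x)=B_{p,q}(px/(px+q))$ with $B_{p,q}$ the Beta$(p,q)$ cdf, and $F_H^{-1}$ is its quantile function. Stringency: $\sigma(\theta,u)=\theta/F_H^{-1}(1-u)$. Coverage: $\mathsf y$ is covered if $\mathbb P(\mathsf{SIR}_{\mathsf y}>\theta)>u$; $C_{\mathsf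 x}$ is the set of covered locations $\mathsf y$ served by $\mathsf x$, and the coverage manifold is $\mathcal C=\bigcup_{\mathsf x}C_{\mathsf x}$. Q cell: $Q_{\mathsf x}(\rho)=\{\mathsf y\in\mathbb{R}^2:\ \min_{\mathsf x'\in\mathcal X\setminus\{\mathsf x\}}\|\mathsf x'-\mathsf y\|>\rho\|\mathsf x-\mathsf y\|\}$. *)

theory Defs
  imports "HOL-Probability.Probability"
begin

type_synonym point = "real ^ 2"

definition locally_finite_set :: "point set \<Rightarrow> bool" where
  "locally_finite_set X \<longleftrightarrow> (\<forall>r::real. finite (X \<inter> cball 0 r))"

text \<open>Gamma(shape k, rate k) density and distribution (unit mean, Nakagami fading power).\<close>
definition gamma_density :: "real \<Rightarrow> real \<Rightarrow> real" where
  "gamma_density k t = (if t > 0 then k powr k * t powr (k - 1) * exp (- k * t) / Gamma k else 0)"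

definition gamma_measure :: "real \<Rightarrow> real measure" where
  "gamma_measure k = density lborel (\<lambda>t. ennreal (gamma_density k t))"

definition fading_measure :: "real \<Rightarrow> real \<Rightarrow> point set \<Rightarrow> point \<Rightarrow> (point \<Rightarrow> real) measure" where
  "fading_measure p q X x = (\<Pi>\<^sub>M z\<in>X. (if z = x then gamma_measure p else gamma_measure q))"

definition path_gain :: "real \<Rightarrow> real \<Rightarrow> ennreal" where
  "path_gain \<alpha> d = (if d = 0 then \<top> else ennreal (d powr (- \<alpha>)))"

definition SIR :: "real \<Rightarrow> point set \<Rightarrow> point \<Rightarrow> point \<Rightarrow> (point \<Rightarrow> real) \<Rightarrow> ennreal" where
  "SIR \<alpha> X x y h =
     (ennreal (h x) * path_gain \<alpha> (dist x y)) /
     (\<Sum>\<^sub>\<infinity> x'\<in>X - {x}. ennreal (h x') * path_gain \<alpha> (dist x' y))"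

definition serves :: "point set \<Rightarrow> point \<Rightarrow> point \<Rightarrow> bool" where
  "serves X x y \<longleftrightarrow> x \<in> X \<and> (\<forall>x'\<in>X. dist x y \<le> dist x' y)"

definition coverage_prob :: "real \<Rightarrow> real \<Rightarrow> real \<Rightarrow> point set \<Rightarrow> real \<Rightarrow> point \<Rightarrow> point \<Rightarrow> real" where
  "coverage_prob p q \<alpha> X \<theta> x y =
     measure (fading_measure p q X x)
       {h \<in> space (fading_measure p q X x). SIR \<alpha> X x y h > ennreal \<theta>}"

definition covered_cell ("C") where
  "C p q \<alpha> X \<theta> u x = {y. serves X x y \<and> coverage_prob p q \<alpha> X \<theta> x y > u}"

definition coverage_manifold where
  "coverage_manifold p q \<alpha> X \<theta> u = (\<Union>x\<in>X. C p q \<alpha> X \<theta> u x)"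

definition beta_cdf :: "real \<Rightarrow> real \<Rightarrow> real \<Rightarrow> real" where
  "beta_cdf p q t =
     (if t \<le> 0 then 0 else if t \<ge> 1 then 1
      else (LBINT s=0..t. s powr (p - 1) * (1 - s) powr (q - 1)) / Beta p q)"

text \<open>cdf of H = h1/h2 (H is positive, so F_H = 0 on nonpositive reals).\<close>
definition F_H :: "real \<Rightarrow> real \<Rightarrow> real \<Rightarrow> real" where
  "F_H p q x = (if x \<le> 0 then 0 else beta_cdf p q (p * x / (p * x + q)))"

definition F_H_inv :: "real \<Rightarrow> real \<Rightarrow> real \<Rightarrow> ereal" where
  "F_H_inv p q v = Inf {ereal x | x. F_H p q x \<ge> v}"

text \<open>Stringency sigma = theta / F_H^{-1}(1-u) (equal to 0 when the quantile is infinite).\<close>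
definition stringency :: "real \<Rightarrow> real \<Rightarrow> real \<Rightarrow> real \<Rightarrow> real" where
  "stringency p q \<theta> u = real_of_ereal (ereal \<theta> / F_H_inv p q (1 - u))"

definition Q_cell :: "point set \<Rightarrow> point \<Rightarrow> real \<Rightarrow> point set" where
  "Q_cell X x \<rho> = {y. (INF x'\<in>X - {x}. dist x' y) > \<rho> * dist x y}"

end

theory Submission
  imports Defs
begin

(* If y is served by x at distance d and the nearest interferer x1 is at distance d1, the
   interference is at least the x1 term, so SIR <= theta as soon as h(x) <= c h(x1) with
   c = theta (d / d1)^alpha.  This event has probability F_H c, hence coverage with probability
   above u forces F_H c < 1 - u.  Since F_H is continuous and monotone, c then lies strictly
   below the quantile F_H^-1 (1 - u), which says exactly d1 > sigma^(1/alpha) d.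
   Most of the work identifies P(h(x) <= c h(x1)) with the Beta-cdf expression defining F_H:
   the ratio of the two Gamma variables has an explicit density, and the substitution
   w = q s / (p (1 - s)) turns its integral over ]-oo, c] into the Beta integral up to
   p c / (p c + q). *)

section \<open>Gamma fading\<close>

lemma nn_integral_powr_exp_Gamma:
  fixes a k :: real assumes a: "a > 0" and k: "k > 0"
  shows "(\<integral>\<^sup>+b. ennreal (b powr (a-1) * exp (-(k*b))) * indicator {0..} b \<partial>lborel)
         = ennreal (Gamma a / k powr a)"
proof -
  let ?I = "\<integral>\<^sup>+b. ennreal (b powr (a-1) * exp (-(k*b))) * indicator {0..} b \<partial>lborel"
  have "ennreal (Gamma a) = (\<integral>\<^sup>+t. ennreal (t powr (a-1) / exp t) * indicator {0..} t \<partial>lborel)"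
    by (rule nn_integral_has_integral_lebesgue'[OF _ Gamma_integral_real[OF a], symmetric]) auto
  also have "\<dots> = ennreal k * (\<integral>\<^sup>+b. ennreal ((0 + k*b) powr (a-1) / exp (0 + k*b))
                                     * indicator {0..} (0 + k*b) \<partial>lborel)"
    using k by (subst nn_integral_real_affine[where t=0 and c=k]) auto
  also have "\<dots> = ennreal k * (\<integral>\<^sup>+b. ennreal (k powr (a-1)) *
                   (ennreal (b powr (a-1) * exp (-(k*b))) * indicator {0..} b) \<partial>lborel)"
  proof -
    have "ennreal ((k*b) powr (a-1) / exp (k*b)) * indicator {0..} (k*b)
      = ennreal (k powr (a-1)) * (ennreal (b powr (a-1) * exp (-(k*b))) * indicator {0..} b)" for b
    proof (cases "b \<ge> 0")
      case True
      then have "(k*b) powr (a-1) / exp (k*b) = k powr (a-1) * (b powr (a-1) * exp (-(k*b)))"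
        using k by (simp add: powr_mult exp_minus divide_inverse)
      then show ?thesis using True k by (simp add: ennreal_mult'[symmetric] indicator_def)
    qed (use k in \<open>simp add: indicator_def zero_le_mult_iff\<close>)
    then show ?thesis by simp
  qed
  also have "\<dots> = ennreal (k powr a) * ?I"
    using k by (subst nn_integral_cmult)
      (auto simp: ennreal_mult'[symmetric] mult.assoc[symmetric] powr_mult_base)
  finally have E: "ennreal (k powr a) * ?I = ennreal (Gamma a)" ..
  have "?I = ennreal (1 / k powr a) * (ennreal (k powr a) * ?I)"
    using k by (simp add: mult.assoc[symmetric] ennreal_mult'[symmetric])
  also have "\<dots> = ennreal (Gamma a / k powr a)"
    using E k a by (simp add: ennreal_mult'[symmetric] Gamma_real_pos less_imp_le)
  finally show ?thesis .
qed

lemma gamma_density_measurable [measurable]: "gamma_density k \<in> borel_measurable borel"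
  unfolding gamma_density_def by measurable

lemma gamma_density_nonneg: "k > 0 \<Longrightarrow> gamma_density k t \<ge> 0"
  unfolding gamma_density_def by (auto intro!: divide_nonneg_pos Gamma_real_pos)

lemma ennreal_gamma_density:
  assumes k: "k > 0"
  shows "ennreal (gamma_density k t)
       = ennreal (k powr k / Gamma k) * (ennreal (t powr (k-1) * exp (-(k*t))) * indicator {0..} t)"
proof (cases "t > 0")
  case True
  then have "gamma_density k t = k powr k / Gamma k * (t powr (k-1) * exp (-(k*t)))"
    by (simp add: gamma_density_def)
  then have "ennreal (gamma_density k t)
      = ennreal (k powr k / Gamma k) * ennreal (t powr (k-1) * exp (-(k*t)))"
    using k by (simp only: ennreal_mult' Gamma_real_pos less_imp_le divide_nonneg_pos
        powr_ge_zero)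
  then show ?thesis using True by (simp add: indicator_def)
qed (cases "t = 0"; auto simp: gamma_density_def indicator_def)

lemma prob_space_gamma_measure:
  assumes k: "k > 0" shows "prob_space (gamma_measure k)"
proof (rule prob_spaceI)
  have M: "(\<lambda>t. ennreal (t powr (k-1) * exp (-(k*t))) * indicator {0..} t)
      \<in> borel_measurable lborel"
    by measurable
  have "emeasure (gamma_measure k) (space (gamma_measure k))
      = (\<integral>\<^sup>+t. ennreal (gamma_density k t) \<partial>lborel)"
    unfolding gamma_measure_def by (simp add: emeasure_density)
  also have "\<dots> = ennreal (k powr k / Gamma k) * ennreal (Gamma k / k powr k)"
    by (simp only: ennreal_gamma_density[OF k] nn_integral_cmult[OF M]
        nn_integral_powr_exp_Gamma[OF k k])
  also have "\<dots> = 1"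
    using k Gamma_real_pos[of k]
    by (simp add: ennreal_mult'[symmetric] less_imp_le less_imp_neq[symmetric])
  finally show "emeasure (gamma_measure k) (space (gamma_measure k)) = 1" .
qed

lemma sets_gamma_measure [simp]: "sets (gamma_measure k) = sets borel"
  by (simp add: gamma_measure_def)

section \<open>The Beta kernel and the distribution function F_H\<close>

definition beta_kernel :: "real \<Rightarrow> real \<Rightarrow> real \<Rightarrow> real" where
  "beta_kernel p q x = x powr (p-1) * (1-x) powr (q-1)"

lemma beta_kernel_nonneg: "beta_kernel p q x \<ge> 0" by (simp add: beta_kernel_def)

lemma beta_kernel_measurable [measurable]: "beta_kernel p q \<in> borel_measurable borel"
  unfolding beta_kernel_def by measurable

lemma beta_kernel_integrable_01:
  "p > 0 \<Longrightarrow> q > 0 \<Longrightarrow> beta_kernel p q integrable_on {0..1}"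
  using has_integral_Beta_real[of p q] unfolding beta_kernel_def by blast

lemma beta_kernel_integrable:
  "p > 0 \<Longrightarrow> q > 0 \<Longrightarrow> 0 \<le> a \<Longrightarrow> b \<le> 1 \<Longrightarrow> beta_kernel p q integrable_on {a..b}"
  by (rule integrable_on_subinterval[OF beta_kernel_integrable_01]) auto

lemma integral_beta_kernel_mono:
  assumes p: "p > 0" and q: "q > 0" and "0 \<le> a" "a \<le> b" "b \<le> 1"
  shows "integral {0..a} (beta_kernel p q) \<le> integral {0..b} (beta_kernel p q)"
proof -
  have "integral {0..a} (beta_kernel p q) + integral {a..b} (beta_kernel p q)
      = integral {0..b} (beta_kernel p q)"
    using assms by (intro Henstock_Kurzweil_Integration.integral_combine beta_kernel_integrable)
      auto
  moreover have "0 \<le> integral {a..b} (beta_kernel p q)"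
    using assms by (intro integral_nonneg beta_kernel_integrable) (auto simp: beta_kernel_nonneg)
  ultimately show ?thesis by linarith
qed

lemma continuous_on_integral_beta_kernel:
  "p > 0 \<Longrightarrow> q > 0 \<Longrightarrow> continuous_on {0..1} (\<lambda>x. integral {0..x} (beta_kernel p q))"
  by (rule indefinite_integral_continuous_1[OF beta_kernel_integrable_01])

lemma Beta_real_pos: "(p::real) > 0 \<Longrightarrow> q > 0 \<Longrightarrow> Beta p q > 0"
  using Gamma_real_pos[of p] Gamma_real_pos[of q] Gamma_real_pos[of "p+q"] by (simp add: Beta_def)

lemma nn_integral_beta_kernel:
  assumes p: "p > 0" and q: "q > 0" and s: "0 \<le> \<sigma>" "\<sigma> \<le> 1"
  shows "(\<integral>\<^sup>+x. ennreal (beta_kernel p q x / Beta p q * indicator {0..\<sigma>} x) \<partial>lborel)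
       = ennreal (integral {0..\<sigma>} (beta_kernel p q) / Beta p q)"
proof -
  have "((\<lambda>x. beta_kernel p q x / Beta p q)
          has_integral integral {0..\<sigma>} (beta_kernel p q) / Beta p q) {0..\<sigma>}"
    using beta_kernel_integrable[OF p q, of 0 \<sigma>] s by (intro has_integral_divide) auto
  then have "(\<integral>\<^sup>+x. ennreal (beta_kernel p q x / Beta p q) * indicator {0..\<sigma>} x \<partial>lborel)
      = ennreal (integral {0..\<sigma>} (beta_kernel p q) / Beta p q)"
    using Beta_real_pos[OF p q]
    by (intro nn_integral_has_integral_lebesgue') (auto simp: beta_kernel_nonneg)
  moreover have "(\<integral>\<^sup>+x. ennreal (beta_kernel p q x / Beta p q * indicator {0..\<sigma>} x) \<partial>lborel)
      = (\<integral>\<^sup>+x. ennreal (beta_kernel p q x / Beta p q) * indicator {0..\<sigma>} x \<partial>lborel)"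
    by (intro nn_integral_cong) (simp add: indicator_def)
  ultimately show ?thesis by simp
qed

lemma beta_cdf_eq_integral:
  assumes p: "p > 0" and q: "q > 0" and s: "0 < \<sigma>" "\<sigma> < 1"
  shows "beta_cdf p q \<sigma> = integral {0..\<sigma>} (beta_kernel p q) / Beta p q"
proof -
  have I: "(beta_kernel p q has_integral integral {0..\<sigma>} (beta_kernel p q)) {0..\<sigma>}"
    using beta_kernel_integrable[OF p q, of 0 \<sigma>] s by (simp add: integrable_integral)
  have nn: "(\<integral>\<^sup>+x. ennreal (indicator {0..\<sigma>} x * beta_kernel p q x) \<partial>lborel)
      = ennreal (integral {0..\<sigma>} (beta_kernel p q))"
    using nn_integral_has_integral_lebesgue[OF _ I] by (simp add: beta_kernel_nonneg)
  have "set_integrable lborel {0..\<sigma>} (beta_kernel p q)"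
    unfolding set_integrable_def
    by (rule integrableI_nonneg) (auto simp: nn beta_kernel_nonneg)
  then have "(LINT x : {0..\<sigma>} | lborel. beta_kernel p q x) = integral {0..\<sigma>} (beta_kernel p q)"
    by (rule set_borel_integral_eq_integral)
  moreover have "(LBINT x=0..\<sigma>. beta_kernel p q x) = (LINT x : {0..\<sigma>} | lborel. beta_kernel p q x)"
    using interval_integral_Icc[of 0 \<sigma> "beta_kernel p q"] s by (simp add: zero_ereal_def)
  ultimately show ?thesis using s unfolding beta_cdf_def by (simp add: beta_kernel_def)
qed

lemma Beta_cdf_argument_bounds:
  fixes p q c :: real
  assumes p: "p > 0" and q: "q > 0" and c: "c > 0"
  shows "0 < p*c/(p*c+q)" "p*c/(p*c+q) < 1"
proof -
  have pcq: "p*c+q > 0" using p q c by (simp add: add_pos_pos)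
  show "0 < p*c/(p*c+q)" using pcq p c by simp
  show "p*c/(p*c+q) < 1" using pcq q by (simp add: divide_less_eq)
qed

lemma F_H_eq_integral_beta_kernel:
  assumes p: "p > 0" and q: "q > 0" and c: "c > 0"
  shows "F_H p q c = integral {0..p*c/(p*c+q)} (beta_kernel p q) / Beta p q"
  using c Beta_cdf_argument_bounds[OF p q c] by (simp add: F_H_def beta_cdf_eq_integral[OF p q])

lemma F_H_nonneg:
  assumes p: "p > 0" and q: "q > 0"
  shows "F_H p q c \<ge> 0"
proof (cases "c > 0")
  case True
  have "integral {0..p*c/(p*c+q)} (beta_kernel p q) \<ge> 0"
    using Beta_cdf_argument_bounds[OF p q True]
    by (intro integral_nonneg beta_kernel_integrable[OF p q]) (auto simp: beta_kernel_nonneg)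
  then show ?thesis using F_H_eq_integral_beta_kernel[OF p q True] Beta_real_pos[OF p q] by simp
qed (simp add: F_H_def)

lemma F_H_mono:
  assumes p: "p > 0" and q: "q > 0" and x: "0 < x" "x \<le> y"
  shows "F_H p q x \<le> F_H p q y"
proof -
  have y: "y > 0" using x by simp
  have "p*x/(p*x+q) \<le> p*y/(p*y+q)"
    using p q x y by (simp add: field_simps add_pos_pos mult_left_mono)
  then have "integral {0..p*x/(p*x+q)} (beta_kernel p q)
      \<le> integral {0..p*y/(p*y+q)} (beta_kernel p q)"
    using Beta_cdf_argument_bounds[OF p q x(1)] Beta_cdf_argument_bounds[OF p q y]
    by (intro integral_beta_kernel_mono[OF p q]) auto
  then show ?thesis
    using F_H_eq_integral_beta_kernel[OF p q x(1)] F_H_eq_integral_beta_kernel[OF p q y]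
      Beta_real_pos[OF p q]
    by (simp add: divide_right_mono)
qed

lemma isCont_F_H:
  assumes p: "p > 0" and q: "q > 0" and c: "c > 0"
  shows "isCont (F_H p q) c"
proof -
  let ?H = "\<lambda>t. integral {0..p*t/(p*t+q)} (beta_kernel p q) / Beta p q"
  have nz: "p*t+q \<noteq> 0" if "t \<in> {0<..}" for t
    using p q that by (simp add: add_pos_pos less_imp_neq[symmetric])
  have "continuous_on {0<..} (\<lambda>t. p*t/(p*t+q))"
    using nz by (intro continuous_intros) auto
  moreover have "(\<lambda>t. p*t/(p*t+q)) ` {0<..} \<subseteq> {0..1}"
  proof (rule image_subsetI)
    fix t :: real assume "t \<in> {0<..}"
    then have "0 < p*t/(p*t+q)" "p*t/(p*t+q) < 1" using Beta_cdf_argument_bounds[OF p q] by auto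
    then show "p*t/(p*t+q) \<in> {0..1}" by simp
  qed
  ultimately have "continuous_on {0<..} (\<lambda>t. integral {0..p*t/(p*t+q)} (beta_kernel p q))"
    by (rule continuous_on_compose2[OF continuous_on_integral_beta_kernel[OF p q]])
  then have "continuous_on {0<..} ?H" using Beta_real_pos[OF p q] by (intro continuous_intros) auto
  then have "isCont ?H c"
    using c by (intro continuous_on_interior[where S="{0<..}"]) (auto simp: interior_open)
  moreover have "\<forall>\<^sub>F t in nhds c. F_H p q t = ?H t"
    using eventually_nhds_in_open[of "{0<..}" c] c
    by (auto elim!: eventually_mono simp: F_H_eq_integral_beta_kernel[OF p q])
  ultimately show ?thesis using isCont_cong[of "F_H p q" ?H c] by simp
qed

section \<open>The law of the fading ratio\<close>

(* The joint density of (h2, h1 / h2) at (b, w), for independent h1 ~ Gamma(p,p) and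
   h2 ~ Gamma(q,q). *)
definition ratio_joint_density :: "real \<Rightarrow> real \<Rightarrow> real \<Rightarrow> real \<Rightarrow> real" where
  "ratio_joint_density p q b w = gamma_density q b * b * gamma_density p (b*w)"

(* Its second marginal, the density of h1 / h2. *)
definition ratio_density :: "real \<Rightarrow> real \<Rightarrow> real \<Rightarrow> real" where
  "ratio_density p q w =
     (if w > 0 then p powr p * q powr q / (Gamma p * Gamma q) * Gamma (p+q)
                    * w powr (p-1) / (q + p*w) powr (p+q)
      else 0)"

lemma ratio_density_measurable [measurable]: "ratio_density p q \<in> borel_measurable borel"
  unfolding ratio_density_def by measurable

lemma nn_integral_gamma_density_Iic_scale:
  assumes p: "p > 0" and b: "b > 0"
  shows "(\<integral>\<^sup>+a. ennreal (gamma_density p a) * indicator {..c*b} a \<partial>lborel)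
       = (\<integral>\<^sup>+w. ennreal (b * gamma_density p (b*w)) * indicator {..c} w \<partial>lborel)"
proof -
  have "(\<integral>\<^sup>+a. ennreal (gamma_density p a) * indicator {..c*b} a \<partial>lborel)
      = ennreal b * (\<integral>\<^sup>+w. ennreal (gamma_density p (0 + b*w)) * indicator {..c*b} (0 + b*w)
                       \<partial>lborel)"
    using b by (subst nn_integral_real_affine[where t=0 and c=b]) auto
  also have "\<dots> = (\<integral>\<^sup>+w. ennreal b * (ennreal (gamma_density p (b*w)) * indicator {..c} w) \<partial>lborel)"
    using b by (subst nn_integral_cmult) (auto simp: indicator_def mult.commute[of c])
  also have "\<dots> = (\<integral>\<^sup>+w. ennreal (b * gamma_density p (b*w)) * indicator {..c} w \<partial>lborel)"
    using b p by (intro nn_integral_cong) (simp add: ennreal_mult' mult.assoc)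
  finally show ?thesis .
qed

lemma ratio_joint_density_eq:
  assumes p: "p > 0" and q: "q > 0" and b: "b > 0" and w: "w > 0"
  shows "ratio_joint_density p q b w
       = (p powr p * q powr q / (Gamma p * Gamma q) * w powr (p-1))
         * (b powr ((p+q)-1) * exp (-((q+p*w)*b)))"
proof -
  have e: "exp (- (q*b)) * exp (- (p*(b*w))) = exp (-((q+p*w)*b))"
    by (simp add: exp_add[symmetric] algebra_simps)
  have "b powr (q-1) * b * b powr (p-1) = b powr (q-1) * b powr 1 * b powr (p-1)"
    by (simp only: powr_one[OF less_imp_le[OF b]])
  also have "\<dots> = b powr ((q-1)+1+(p-1))" by (simp only: powr_add)
  finally have pw: "b powr ((p+q)-1) = b powr (q-1) * b * b powr (p-1)" by (simp add: algebra_simps)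
  show ?thesis using b w
    by (simp add: ratio_joint_density_def gamma_density_def powr_mult pw e[symmetric] field_simps
        exp_add[symmetric])
qed

lemma nn_integral_ratio_joint_density:
  assumes p: "p > 0" and q: "q > 0"
  shows "(\<integral>\<^sup>+b. ennreal (ratio_joint_density p q b w) \<partial>lborel) = ennreal (ratio_density p q w)"
proof (cases "w > 0")
  case False
  then have "ratio_joint_density p q b w = 0" for b
    by (cases "b > 0") (auto simp: ratio_joint_density_def gamma_density_def zero_less_mult_iff)
  then show ?thesis using False by (simp add: ratio_density_def)
next
  case w: True
  define K where "K = p powr p * q powr q / (Gamma p * Gamma q) * w powr (p-1)"
  have K: "K \<ge> 0" unfolding K_def using p q by (simp add: Gamma_real_pos less_imp_le)
  have qpw: "q + p*w > 0" using p q w by (simp add: add_pos_pos)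
  have "ennreal (ratio_joint_density p q b w)
      = ennreal K * (ennreal (b powr ((p+q)-1) * exp (-((q+p*w)*b))) * indicator {0..} b)" for b
  proof (cases "b > 0")
    case True
    have "ratio_joint_density p q b w = K * (b powr ((p+q)-1) * exp (-((q+p*w)*b)))"
      unfolding K_def by (rule ratio_joint_density_eq[OF p q True w])
    then have "ennreal (ratio_joint_density p q b w)
        = ennreal K * ennreal (b powr ((p+q)-1) * exp (-((q+p*w)*b)))"
      using K by (simp only: ennreal_mult')
    then show ?thesis using True by (simp add: indicator_def)
  qed (cases "b = 0"; auto simp: ratio_joint_density_def gamma_density_def indicator_def)
  then have "(\<integral>\<^sup>+b. ennreal (ratio_joint_density p q b w) \<partial>lborel)
      = ennreal K * ennreal (Gamma (p+q) / (q+p*w) powr (p+q))"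
    by (simp add: nn_integral_cmult nn_integral_powr_exp_Gamma[OF add_pos_pos[OF p q] qpw])
  also have "\<dots> = ennreal (K * (Gamma (p+q) / (q+p*w) powr (p+q)))"
    using K by (rule ennreal_mult'[symmetric])
  also have "K * (Gamma (p+q) / (q+p*w) powr (p+q)) = ratio_density p q w"
    using w by (simp add: ratio_density_def K_def field_simps)
  finally show ?thesis .
qed

lemma nn_integral_gamma_ratio_Iic:
  assumes p: "p > 0" and q: "q > 0"
  shows "(\<integral>\<^sup>+b. ennreal (gamma_density q b) *
            (\<integral>\<^sup>+a. ennreal (gamma_density p a) * indicator {..c*b} a \<partial>lborel) \<partial>lborel)
       = (\<integral>\<^sup>+w. ennreal (ratio_density p q w) * indicator {..c} w \<partial>lborel)"
proof -
  have inner: "ennreal (gamma_density q b) *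
        (\<integral>\<^sup>+a. ennreal (gamma_density p a) * indicator {..c*b} a \<partial>lborel)
      = (\<integral>\<^sup>+w. ennreal (ratio_joint_density p q b w) * indicator {..c} w \<partial>lborel)" for b
  proof (cases "b > 0")
    case True
    then show ?thesis
      using q by (simp add: nn_integral_gamma_density_Iic_scale[OF p True] flip: nn_integral_cmult)
        (auto intro!: nn_integral_cong simp: ratio_joint_density_def ennreal_mult'
          gamma_density_nonneg mult.assoc)
  qed (simp add: ratio_joint_density_def gamma_density_def)
  have "(\<integral>\<^sup>+b. ennreal (gamma_density q b) *
            (\<integral>\<^sup>+a. ennreal (gamma_density p a) * indicator {..c*b} a \<partial>lborel) \<partial>lborel)
      = (\<integral>\<^sup>+b. \<integral>\<^sup>+w. ennreal (ratio_joint_density p q b w) * indicator {..c} w \<partial>lborel \<partial>lborel)"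
    by (simp only: inner)
  also have "\<dots> = (\<integral>\<^sup>+w. \<integral>\<^sup>+b. ennreal (ratio_joint_density p q b w) * indicator {..c} w
                      \<partial>lborel \<partial>lborel)"
    by (rule lborel_pair.Fubini'[symmetric]) (unfold ratio_joint_density_def, measurable)
  also have "\<dots> = (\<integral>\<^sup>+w. ennreal (ratio_density p q w) * indicator {..c} w \<partial>lborel)"
    by (simp add: nn_integral_multc ratio_joint_density_def nn_integral_ratio_joint_density[OF p q,
        unfolded ratio_joint_density_def])
  finally show ?thesis .
qed

lemma ratio_density_Beta_substitution:
  assumes p: "p > 0" and q: "q > 0" and x: "0 < x" "x < 1"
  shows "ratio_density p q (q*x/(p*(1-x))) * (q/(p*(1-x)^2)) = beta_kernel p q x / Beta p q"
proof -
  define u where "u = 1 - x"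
  have u: "u > 0" using x by (simp add: u_def)
  have gpos: "q*x/(p*u) > 0" using p q x u by simp
  have e0: "q + p*(q*x/(p*u)) = q/u" using p u x by (simp add: u_def field_simps)
  have e1: "p powr p = p powr (p-1) * p"
    using p by (simp add: powr_diff)
  have e2: "q powr (p+q) = q powr q * q powr (p-1) * q"
    using q by (simp add: powr_add powr_diff)
  have e3: "u powr (p+q) = u powr (q-1) * u powr (p-1) * u^2"
  proof -
    have "u powr (q-1) * u powr (p-1) * u^2 = u powr (q-1) * u powr (p-1) * u powr 2"
      using u by (simp add: powr_realpow)
    also have "\<dots> = u powr ((q-1)+(p-1)+2)" by (simp only: powr_add)
    finally show ?thesis by (simp add: algebra_simps)
  qed
  have e4: "(q*x/(p*u)) powr (p-1) = q powr (p-1) * x powr (p-1) / (p powr (p-1) * u powr (p-1))"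
    using p q x u by (simp add: powr_divide powr_mult)
  have e5: "(q/u) powr (p+q) = q powr (p+q) / u powr (p+q)"
    using q u by (simp add: powr_divide)
  have GB: "Beta p q = Gamma p * Gamma q / Gamma (p+q)" by (simp add: Beta_def)
  have G: "Gamma p > 0" "Gamma q > 0" "Gamma (p+q) > 0" using p q by (auto intro!: Gamma_real_pos)
  have "ratio_density p q (q*x/(p*u)) = p powr p * q powr q / (Gamma p * Gamma q) * Gamma (p+q) *
         (q*x/(p*u)) powr (p-1) / (q + p*(q*x/(p*u))) powr (p+q)"
    using gpos by (simp add: ratio_density_def)
  also have "\<dots> = p powr p * q powr q / (Gamma p * Gamma q) * Gamma (p+q) *
         (q powr (p-1) * x powr (p-1) / (p powr (p-1) * u powr (p-1)))
         / (q powr (p+q) / u powr (p+q))"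
    by (simp only: e0 e4 e5)
  finally have F: "ratio_density p q (q*x/(p*u)) = \<dots>" .
  show ?thesis
    unfolding beta_kernel_def u_def[symmetric] F GB e1 e2 e3 using p q u x G
    by (simp add: field_simps)
qed

lemma Beta_cdf_argument_inverse:
  fixes p q c :: real
  assumes p: "p > 0" and q: "q > 0" and c: "c > 0"
  shows "q * (p*c/(p*c+q)) / (p * (1 - p*c/(p*c+q))) = c"
proof -
  have "p*c+q > 0" using p q c by (simp add: add_pos_pos)
  then have "1 - p*c/(p*c+q) = q/(p*c+q)" by (simp add: field_simps)
  then show ?thesis using p q \<open>p*c+q > 0\<close> by simp
qed

lemma nn_integral_ratio_density_Iic:
  assumes p: "p > 0" and q: "q > 0" and c: "c > 0"
  defines "\<sigma> \<equiv> p*c/(p*c+q)"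
  shows "(\<integral>\<^sup>+w. ennreal (ratio_density p q w) * indicator {..c} w \<partial>lborel)
       = (\<integral>\<^sup>+x. ennreal (beta_kernel p q x / Beta p q * indicator {0..\<sigma>} x) \<partial>lborel)"
proof -
  define g where "g = (\<lambda>x::real. q*x/(p*(1-x)))"
  define g' where "g' = (\<lambda>x::real. q/(p*(1-x)^2))"
  have \<sigma>: "0 < \<sigma>" "\<sigma> < 1" using Beta_cdf_argument_bounds[OF p q c] by (simp_all add: \<sigma>_def)
  have g0: "g 0 = 0" by (simp add: g_def)
  have g\<sigma>: "g \<sigma> = c" using Beta_cdf_argument_inverse[OF p q c] by (simp add: g_def \<sigma>_def)
  have deriv: "(g has_real_derivative g' x) (at x)" if "x \<in> {0..\<sigma>}" for x
  proof -
    have "1 - x \<noteq> 0" using that \<sigma> by auto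
    then show ?thesis unfolding g_def g'_def using p
      by (auto intro!: derivative_eq_intros simp: divide_simps)
        (simp add: algebra_simps power2_eq_square)
  qed
  have cont: "continuous_on {0..\<sigma>} g'"
    unfolding g'_def using \<sigma> p by (auto intro!: continuous_intros)
  have nonneg: "g' x \<ge> 0" for x
    unfolding g'_def using p q by simp
  have Mf: "set_borel_measurable borel {g 0..g \<sigma>} (ratio_density p q)"
    unfolding set_borel_measurable_def by measurable
  have "(\<integral>\<^sup>+w. ennreal (ratio_density p q w) * indicator {..c} w \<partial>lborel)
      = (\<integral>\<^sup>+w. ennreal (ratio_density p q w * indicator {g 0..g \<sigma>} w) \<partial>lborel)"
    by (intro nn_integral_cong) (auto simp: g0 g\<sigma> indicator_def ratio_density_def)
  also have "\<dots> = (\<integral>\<^sup>+x. ennreal (ratio_density p q (g x) * g' x * indicator {0..\<sigma>} x) \<partial>lborel)"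
    by (rule nn_integral_substitution[OF Mf deriv cont nonneg]) (use \<sigma> in auto)
  also have "\<dots> = (\<integral>\<^sup>+x. ennreal (beta_kernel p q x / Beta p q * indicator {0..\<sigma>} x) \<partial>lborel)"
  proof (intro nn_integral_cong)
    fix x :: real
    show "ennreal (ratio_density p q (g x) * g' x * indicator {0..\<sigma>} x)
        = ennreal (beta_kernel p q x / Beta p q * indicator {0..\<sigma>} x)"
    proof (cases "x \<in> {0<..\<sigma>}")
      case True
      then show ?thesis
        unfolding g_def g'_def using ratio_density_Beta_substitution[OF p q] \<sigma>
        by (simp add: indicator_def)
    qed (cases "x = 0"; auto simp: indicator_def g0 ratio_density_def beta_kernel_def)
  qed
  finally show ?thesis .
qed

lemma nn_integral_gamma_ratio_eq_F_H:
  assumes p: "p > 0" and q: "q > 0" and c: "c > 0"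
  shows "(\<integral>\<^sup>+b. ennreal (gamma_density q b) *
            (\<integral>\<^sup>+a. ennreal (gamma_density p a) * indicator {..c*b} a \<partial>lborel) \<partial>lborel)
       = ennreal (F_H p q c)"
  using Beta_cdf_argument_bounds[OF p q c]
  by (simp only: nn_integral_gamma_ratio_Iic[OF p q] nn_integral_ratio_density_Iic[OF p q c]
      nn_integral_beta_kernel[OF p q] F_H_eq_integral_beta_kernel[OF p q c] less_imp_le)

section \<open>The quantile and the stringency\<close>

lemma less_F_H_inv:
  assumes p: "p > 0" and q: "q > 0" and c: "c > 0" and F: "F_H p q c < v"
  shows "ereal c < F_H_inv p q v"
proof -
  obtain d where d: "d > 0" and Fd: "F_H p q (c + d) < v"
  proof -
    obtain e where e: "e > 0"
      and close: "\<And>t. dist t c < e \<Longrightarrow> dist (F_H p q t) (F_H p q c) < v - F_H p q c"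
      using isCont_F_H[OF p q c] F unfolding continuous_at_eps_delta by (metis diff_gt_0_iff_gt)
    have "dist (c + e/2) c < e" using e by (simp add: dist_real_def)
    from close[OF this] have "F_H p q (c + e/2) < v" by (simp add: dist_real_def abs_less_iff)
    then show thesis using e by (intro that[of "e/2"]) auto
  qed
  have "ereal (c + d) \<le> F_H_inv p q v"
    unfolding F_H_inv_def
  proof (rule Inf_greatest, clarify)
    fix x assume x: "v \<le> F_H p q x"
    show "ereal (c + d) \<le> ereal x"
    proof (rule ccontr)
      assume "\<not> ereal (c + d) \<le> ereal x"
      then have "x < c + d" by simp
      moreover have "x > 0"
        using x F F_H_nonneg[OF p q, of c] by (cases "x > 0") (auto simp: F_H_def)
      ultimately have "F_H p q x \<le> F_H p q (c + d)" by (intro F_H_mono[OF p q]) auto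
      then show False using x Fd by simp
    qed
  qed
  moreover have "ereal c < ereal (c + d)" using d by simp
  ultimately show ?thesis by (meson less_le_trans)
qed

lemma stringency_bounds:
  assumes p: "p > 0" and q: "q > 0" and c: "c > 0" and \<theta>: "\<theta> > 0"
    and F: "F_H p q c < 1 - u"
  shows "0 \<le> stringency p q \<theta> u" and "stringency p q \<theta> u < \<theta> / c"
proof -
  have Q: "ereal c < F_H_inv p q (1 - u)" by (rule less_F_H_inv[OF p q c F])
  have "0 \<le> stringency p q \<theta> u \<and> stringency p q \<theta> u < \<theta> / c"
  proof (cases "F_H_inv p q (1 - u)")
    case (real r)
    then have "c < r" using Q by simp
    then have "stringency p q \<theta> u = \<theta> / r" and "\<theta> / r < \<theta> / c"
      using real c \<theta> by (auto simp: stringency_def intro: divide_strict_left_mono)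
    then show ?thesis using \<open>c < r\<close> c \<theta> by simp
  next
    case PInf
    then show ?thesis using c \<theta> by (simp add: stringency_def)
  qed (use Q in simp)
  then show "0 \<le> stringency p q \<theta> u" and "stringency p q \<theta> u < \<theta> / c" by auto
qed

section \<open>Independent fading\<close>

lemma sets_PiM_component_le:
  fixes M :: "'i \<Rightarrow> real measure"
  assumes "i \<in> I" "j \<in> I" and sets_M: "\<And>k. sets (M k) = sets borel"
  shows "{h \<in> space (Pi\<^sub>M I M). h i \<le> c * h j} \<in> sets (Pi\<^sub>M I M)"
proof -
  have "(\<lambda>h. h k) \<in> Pi\<^sub>M I M \<rightarrow>\<^sub>M borel" if "k \<in> I" for k
    using measurable_component_singleton[OF that, of M]
      measurable_cong_sets[OF refl sets_M[of k], of "Pi\<^sub>M I M"] by auto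
  then show ?thesis using assms by measurable
qed

lemma prob_space_fading_measure:
  "p > 0 \<Longrightarrow> q > 0 \<Longrightarrow> prob_space (fading_measure p q X x)"
  unfolding fading_measure_def by (intro prob_space_PiM) (simp add: prob_space_gamma_measure)

lemma emeasure_PiM_component_le:
  fixes M :: "'i \<Rightarrow> real measure"
  assumes "product_prob_space M"
    and ij: "i \<in> I" "j \<in> I" "i \<noteq> j" and sets_M: "\<And>k. sets (M k) = sets borel"
  shows "emeasure (Pi\<^sub>M I M) {h \<in> space (Pi\<^sub>M I M). h i \<le> c * h j}
       = (\<integral>\<^sup>+b. (\<integral>\<^sup>+a. (if a \<le> c * b then 1 else 0) \<partial>M i) \<partial>M j)"
proof -
  interpret product_prob_space M I by fact
  interpret pair_sigma_finite "M i" "M j" by unfold_locales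
  define J where "J = {i, j}"
  define T where "T = {h \<in> space (Pi\<^sub>M J M). h i \<le> c * h j}"
  have T: "T \<in> sets (Pi\<^sub>M J M)"
    unfolding T_def J_def using sets_M by (rule sets_PiM_component_le[rotated 2]) auto
  have "{h \<in> space (Pi\<^sub>M I M). h i \<le> c * h j} = prod_emb I M J T"
    using ij by (auto simp: prod_emb_def T_def J_def space_PiM PiE_def extensional_def)
  then have "emeasure (Pi\<^sub>M I M) {h \<in> space (Pi\<^sub>M I M). h i \<le> c * h j} = emeasure (Pi\<^sub>M J M) T"
    using ij T by (simp add: emeasure_PiM_emb' J_def)
  also have "\<dots> = (\<integral>\<^sup>+h. (if h i \<le> c * h j then 1 else 0) \<partial>Pi\<^sub>M {i, j} M)"
    using T unfolding J_def by (auto intro!: nn_integral_cong simp: T_def J_def indicator_def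
        simp flip: nn_integral_indicator)
  also have "\<dots> = (\<integral>\<^sup>+z. (if fst z \<le> c * snd z then 1 else 0) \<partial>(M i \<Otimes>\<^sub>M M j))"
    using ij by (intro product_nn_integral_pair)
      (simp add: measurable_cong_sets[OF sets_pair_measure_cong[OF sets_M sets_M] refl], measurable)
  also have "\<dots> = (\<integral>\<^sup>+b. (\<integral>\<^sup>+a. (if a \<le> c * b then 1 else 0) \<partial>M i) \<partial>M j)"
    by (subst nn_integral_snd[symmetric])
      (simp_all add: measurable_cong_sets[OF sets_pair_measure_cong[OF sets_M sets_M] refl],
        measurable)
  finally show ?thesis .
qed

lemma emeasure_fading_measure_ratio_le:
  assumes p: "p > 0" and q: "q > 0" and c: "c > 0"
    and X: "x0 \<in> X" "x1 \<in> X" "x0 \<noteq> x1"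
  shows "emeasure (fading_measure p q X x0) {h \<in> space (fading_measure p q X x0). h x0 \<le> c * h x1}
       = ennreal (F_H p q c)"
proof -
  define M where "M = (\<lambda>z. if z = x0 then gamma_measure p else gamma_measure q)"
  interpret M: prob_space "M z" for z
    unfolding M_def using prob_space_gamma_measure[OF p] prob_space_gamma_measure[OF q] by simp
  have "product_prob_space M" by unfold_locales
  then have "emeasure (fading_measure p q X x0) {h \<in> space (fading_measure p q X x0). h x0 \<le> c * h x1}
      = (\<integral>\<^sup>+b. (\<integral>\<^sup>+a. (if a \<le> c * b then 1 else 0) \<partial>gamma_measure p) \<partial>gamma_measure q)"
    using X unfolding fading_measure_def M_def[symmetric]
    by (subst emeasure_PiM_component_le[where I=X]) (auto simp: M_def)
  also have "\<dots> = (\<integral>\<^sup>+b. ennreal (gamma_density q b) *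
      (\<integral>\<^sup>+a. ennreal (gamma_density p a) * indicator {..c*b} a \<partial>lborel) \<partial>lborel)"
    unfolding gamma_measure_def by (simp add: nn_integral_density indicator_def of_bool_def)
  also have "\<dots> = ennreal (F_H p q c)" by (rule nn_integral_gamma_ratio_eq_F_H[OF p q c])
  finally show ?thesis .
qed

section \<open>The nearest interferer and the SIR\<close>

lemma locally_finite_set_nearest:
  assumes LF: "locally_finite_set X" and S: "S \<subseteq> X" "S \<noteq> {}"
  obtains s where "s \<in> S" and "\<And>z. z \<in> S \<Longrightarrow> dist s y \<le> dist z y"
proof -
  obtain z0 where z0: "z0 \<in> S" using S by blast
  define B where "B = S \<inter> cball y (dist z0 y)"
  have "cball y (dist z0 y) \<subseteq> cball 0 (dist z0 y + norm y)"
    by (subst cball_subset_cball_iff) (auto simp: dist_norm)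
  then have "B \<subseteq> X \<inter> cball 0 (dist z0 y + norm y)" using S by (auto simp: B_def)
  then have fin: "finite B" using LF unfolding locally_finite_set_def by (meson finite_subset)
  have z0B: "z0 \<in> B" using z0 by (simp add: B_def dist_commute)
  define s where "s = arg_min_on (\<lambda>z. dist z y) B"
  have B: "B \<noteq> {}" using z0B by blast
  have s: "s \<in> B" unfolding s_def by (rule arg_min_if_finite(1)[OF fin B])
  have s_min: "dist s y \<le> dist z y" if "z \<in> B" for z
    unfolding s_def by (rule arg_min_least[OF fin B that])
  show thesis
  proof (rule that)
    show "s \<in> S" using s by (simp add: B_def)
    fix z assume z: "z \<in> S"
    show "dist s y \<le> dist z y"
    proof (cases "z \<in> B")
      case False
      then have "dist z0 y < dist z y" using z by (auto simp: B_def dist_commute)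
      then show ?thesis using s_min[OF z0B] by simp
    qed (rule s_min)
  qed
qed

lemma interference_ge_term:
  assumes "x1 \<in> X - {x}"
  shows "ennreal (h x1) * path_gain \<alpha> (dist x1 y)
       \<le> (\<Sum>\<^sub>\<infinity> x'\<in>X - {x}. ennreal (h x') * path_gain \<alpha> (dist x' y))"
proof -
  have "(\<Sum>\<^sub>\<infinity> x'\<in>{x1}. ennreal (h x') * path_gain \<alpha> (dist x' y))
      \<le> (\<Sum>\<^sub>\<infinity> x'\<in>X - {x}. ennreal (h x') * path_gain \<alpha> (dist x' y))"
    using assms by (intro infsum_mono_neutral nonneg_summable_on_complete) auto
  then show ?thesis by simp
qed

lemma SIR_le_of_fading_le:
  fixes X :: "point set"
  assumes x1: "x1 \<in> X - {x}" and d: "dist x y > 0" and d1: "dist x1 y > 0"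
    and \<alpha>: "\<alpha> > 0" and \<theta>: "\<theta> > 0"
    and le: "h x \<le> \<theta> * (dist x y / dist x1 y) powr \<alpha> * h x1"
  shows "SIR \<alpha> X x y h \<le> ennreal \<theta>"
proof (cases "h x > 0")
  case False
  then show ?thesis by (simp add: SIR_def ennreal_neg)
next
  case True
  define D where "D = dist x y"
  define D1 where "D1 = dist x1 y"
  define \<Sigma> where "\<Sigma> = (\<Sum>\<^sub>\<infinity> x'\<in>X - {x}. ennreal (h x') * path_gain \<alpha> (dist x' y))"
  have D: "D > 0" "D1 > 0" using d d1 by (simp_all add: D_def D1_def)
  have "ennreal (h x1 * D1 powr (-\<alpha>)) = ennreal (h x1) * path_gain \<alpha> (dist x1 y)"
    using D by (simp add: path_gain_def D1_def ennreal_mult'')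
  then have T: "ennreal (h x1 * D1 powr (-\<alpha>)) \<le> \<Sigma>"
    unfolding \<Sigma>_def using interference_ge_term[OF x1] by simp
  have "0 < \<theta> * (D / D1) powr \<alpha> * h x1" using le True by (simp add: D_def D1_def)
  moreover have "0 < \<theta> * (D / D1) powr \<alpha>" using \<theta> D by simp
  ultimately have h1: "h x1 > 0" by (simp add: zero_less_mult_iff)
  have "h x * D powr (-\<alpha>) \<le> (\<theta> * (D / D1) powr \<alpha> * h x1) * D powr (-\<alpha>)"
    using le by (intro mult_right_mono) (auto simp: D_def D1_def)
  also have "\<dots> = \<theta> * (h x1 * D1 powr (-\<alpha>))"
    using D by (simp add: powr_divide powr_minus field_simps)
  finally have "ennreal (h x * D powr (-\<alpha>)) \<le> ennreal \<theta> * ennreal (h x1 * D1 powr (-\<alpha>))"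
    using \<theta> by (simp add: ennreal_mult'[symmetric] ennreal_leI)
  also have "\<dots> \<le> ennreal \<theta> * \<Sigma>" using T by (rule mult_left_mono) simp
  finally have N: "ennreal (h x * D powr (-\<alpha>)) \<le> \<Sigma> * ennreal \<theta>" by (simp add: mult.commute)
  have "0 < ennreal (h x1 * D1 powr (-\<alpha>))" using h1 D by simp
  then have "\<Sigma> > 0" using T by (rule less_le_trans)
  moreover have "SIR \<alpha> X x y h = ennreal (h x * D powr (-\<alpha>)) / \<Sigma>"
    using True d by (simp add: SIR_def path_gain_def \<Sigma>_def D_def ennreal_mult')
  ultimately show ?thesis using N by (simp add: divide_le_posI_ennreal)
qed

lemma coverage_prob_le_one_minus_F_H:
  fixes X :: "point set"
  assumes x: "x \<in> X" and x1: "x1 \<in> X - {x}" and d: "0 < dist x y" and d1: "0 < dist x1 y"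
    and p: "p > 0" and q: "q > 0" and \<alpha>: "\<alpha> > 0" and \<theta>: "\<theta> > 0"
  shows "coverage_prob p q \<alpha> X \<theta> x y \<le> 1 - F_H p q (\<theta> * (dist x y / dist x1 y) powr \<alpha>)"
proof -
  define c where "c = \<theta> * (dist x y / dist x1 y) powr \<alpha>"
  have c: "c > 0" using \<theta> d d1 by (simp add: c_def)
  let ?P = "fading_measure p q X x"
  interpret P: prob_space ?P by (rule prob_space_fading_measure[OF p q])
  define S where "S = {h \<in> space ?P. h x \<le> c * h x1}"
  have S: "S \<in> sets ?P"
    unfolding S_def fading_measure_def using x x1 by (intro sets_PiM_component_le) auto
  have "emeasure ?P S = ennreal (F_H p q c)"
    unfolding S_def using x x1 by (intro emeasure_fading_measure_ratio_le[OF p q c]) auto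
  then have PS: "measure ?P S = F_H p q c"
    using F_H_nonneg[OF p q, of c] by (simp add: measure_def)
  have "{h \<in> space ?P. SIR \<alpha> X x y h > ennreal \<theta>} \<subseteq> space ?P - S"
    using SIR_le_of_fading_le[OF x1 d d1 \<alpha> \<theta>] by (fastforce simp: S_def c_def not_le[symmetric])
  then have "coverage_prob p q \<alpha> X \<theta> x y \<le> measure ?P (space ?P - S)"
    unfolding coverage_prob_def using S by (intro P.finite_measure_mono) auto
  also have "\<dots> = 1 - F_H p q c" using S PS by (simp add: P.prob_compl)
  finally show ?thesis by (simp add: c_def)
qed

lemma covered_cell_subset_Q_cell:
  fixes X :: "point set"
  assumes LF: "locally_finite_set X" and NE: "X - {x} \<noteq> {}"
    and p: "p > 0" and q: "q > 0" and \<alpha>: "\<alpha> > 0" and \<theta>: "\<theta> > 0"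
  shows "C p q \<alpha> X \<theta> u x \<subseteq> Q_cell X x (stringency p q \<theta> u powr (1/\<alpha>))"
proof
  fix y assume "y \<in> C p q \<alpha> X \<theta> u x"
  then have x: "x \<in> X" and near: "\<And>x'. x' \<in> X \<Longrightarrow> dist x y \<le> dist x' y"
    and cov: "u < coverage_prob p q \<alpha> X \<theta> x y"
    by (auto simp: covered_cell_def serves_def)
  obtain x1 where x1: "x1 \<in> X - {x}" and x1_min: "\<And>z. z \<in> X - {x} \<Longrightarrow> dist x1 y \<le> dist z y"
    using locally_finite_set_nearest[OF LF _ NE] by blast
  have INF: "(INF z\<in>X - {x}. dist z y) = dist x1 y" using x1 x1_min by (intro cInf_eq_minimum) auto
  define \<rho> where "\<rho> = stringency p q \<theta> u powr (1/\<alpha>)"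
  define d where "d = dist x y"
  define d1 where "d1 = dist x1 y"
  have "\<rho> * d < d1"
  proof (cases "d = 0")
    case True
    then show ?thesis using x1 by (auto simp: d_def d1_def)
  next
    case False
    then have d: "d > 0" by (simp add: d_def)
    moreover have "d \<le> d1" using near[of x1] x1 by (simp add: d_def d1_def)
    ultimately have d1: "d1 > 0" by linarith
    define c where "c = \<theta> * (d / d1) powr \<alpha>"
    have c: "c > 0" using \<theta> d d1 by (simp add: c_def)
    have "F_H p q c < 1 - u"
      using coverage_prob_le_one_minus_F_H[OF x x1 _ _ p q \<alpha> \<theta>] cov d d1
      by (fastforce simp: c_def d_def d1_def)
    note s = stringency_bounds[OF p q c \<theta> this]
    have "\<rho> < (\<theta> / c) powr (1/\<alpha>)"
      unfolding \<rho>_def using s \<alpha> by (intro powr_less_mono2) auto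
    also have "\<dots> = d1 / d"
      using \<alpha> \<theta> d d1 by (simp add: c_def powr_divide powr_powr field_simps)
    finally show ?thesis using d by (simp add: field_simps)
  qed
  then show "y \<in> Q_cell X x (stringency p q \<theta> u powr (1/\<alpha>))"
    by (simp add: Q_cell_def INF \<rho>_def d_def d1_def)
qed

theorem theorem1:
  fixes X :: "point set" and p q \<alpha> \<theta> u :: real
  assumes "locally_finite_set X" and "card X \<ge> 2 \<or> infinite X"
    and "p > 0" and "q > 0" and "\<alpha> > 0" and "\<theta> > 0" and "0 \<le> u" and "u < 1"
  defines "\<rho> \<equiv> stringency p q \<theta> u powr (1 / \<alpha>)"
  shows "(\<forall>x\<in>X. C p q \<alpha> X \<theta> u x \<subseteq> Q_cell X x \<rho>)
     \<and> coverage_manifold p q \<alpha> X \<theta> u \<subseteq> (\<Union>x\<in>X. Q_cell X x \<rho>)"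
proof -
  have "X - {x} \<noteq> {}" if "x \<in> X" for x
  proof
    assume "X - {x} = {}"
    then have "X \<subseteq> {x}" by auto
    then show False using assms(2) card_mono[of "{x}" X] finite_subset[of X "{x}"] by auto
  qed
  then have cells: "\<forall>x\<in>X. C p q \<alpha> X \<theta> u x \<subseteq> Q_cell X x \<rho>"
    unfolding \<rho>_def using assms(1,3-6) covered_cell_subset_Q_cell by blast
  then show ?thesis unfolding coverage_manifold_def by blast
qed

end
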